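(* Let $p,q,s$ be complex numbers with $p\neq 0$, $q\neq 0$, $s^2\neq -1$, and let $A=A(S^4_{p,q,s})$ be the unital complex algebra generated by $\xi,\eta,\zeta,U,V$ subject to the relations $$\zeta\xi=q^2\xi\zeta,\quad \eta\zeta=q^2\zeta\eta,\quad \xi U=pU\xi,\quad V\xi=p\xi V,\quad \eta V=pV\eta,\quad U\eta=p\eta U,$$ $$UV=VU,\quad U\zeta=\zeta U,\quad V\zeta=\zeta V,$$ $$\xi\eta=(\zeta-1)(\zeta+s^2)+UV,\qquad \eta\xi=(q^2\zeta-1)(q^2\zeta+s^2)+UV.$$ Let $e\in \mathrm{Mat}_4(A)$ be $$e=\frac{1}{1+s^2}\begin{pmatrix}1-\zeta&0&U&\xi\\ 0&1-q^2\zeta&-\eta&-pV\\ V&\xi&s^2+\zeta&0\\ -\eta&-p^{-1}U&0&s^2+q^2\zeta\end{pmatrix}.$$ Then $e^2=e$. Moreover, if $q^2$ and $s^2$ are real and $|p|=1$, and $A$ is equipped with the involution determined by $\zeta^*=\zeta$, $\xi^*=-\eta$, $U^*=V$, then $e^*=e$, where $*$ on $\mathrm{Mat}_4(A)$ is the involution of $A$ applied entrywise combined with matrix transposition. *)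

theory Defs
  imports Complex_Main
begin

text \<open>A unital complex algebra: a ring 'a together with a unital ring homomorphism
  c from the complex numbers into the centre of 'a (c z is the scalar z times 1).\<close>
definition central_complex_hom :: "(complex \<Rightarrow> 'a::ring_1) \<Rightarrow> bool" where
  "central_complex_hom c \<longleftrightarrow> c 1 = 1 \<and> (\<forall>z w. c (z + w) = c z + c w)
     \<and> (\<forall>z w. c (z * w) = c z * c w) \<and> (\<forall>z x. c z * x = x * c z)"

definition S4_rels :: "(complex \<Rightarrow> 'a::ring_1) \<Rightarrow> complex \<Rightarrow> complex \<Rightarrow> complex
     \<Rightarrow> 'a \<Rightarrow> 'a \<Rightarrow> 'a \<Rightarrow> 'a \<Rightarrow> 'a \<Rightarrow> bool" where
  "S4_rels c p q s xi eta zeta U V \<longleftrightarrow>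
     zeta * xi = c (q^2) * xi * zeta \<and> eta * zeta = c (q^2) * zeta * eta \<and>
     xi * U = c p * U * xi \<and> V * xi = c p * xi * V \<and>
     eta * V = c p * V * eta \<and> U * eta = c p * eta * U \<and>
     U * V = V * U \<and> U * zeta = zeta * U \<and> V * zeta = zeta * V \<and>
     xi * eta = (zeta - 1) * (zeta + c (s^2)) + U * V \<and>
     eta * xi = (c (q^2) * zeta - 1) * (c (q^2) * zeta + c (s^2)) + U * V"

definition algebra_involution :: "(complex \<Rightarrow> 'a::ring_1) \<Rightarrow> ('a \<Rightarrow> 'a) \<Rightarrow> bool" where
  "algebra_involution c st \<longleftrightarrow> (\<forall>x y. st (x + y) = st x + st y)
     \<and> (\<forall>x y. st (x * y) = st y * st x) \<and> (\<forall>x. st (st x) = x)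
     \<and> (\<forall>z x. st (c z * x) = c (cnj z) * st x)"

text \<open>4x4 matrices over 'a, indexed by 0..3 (entries outside are irrelevant).\<close>
definition mat4_mult :: "(nat \<Rightarrow> nat \<Rightarrow> 'a::ring_1) \<Rightarrow> (nat \<Rightarrow> nat \<Rightarrow> 'a) \<Rightarrow> nat \<Rightarrow> nat \<Rightarrow> 'a" where
  "mat4_mult X Y i j = (\<Sum>k<4. X i k * Y k j)"

definition mat4_star :: "('a \<Rightarrow> 'a) \<Rightarrow> (nat \<Rightarrow> nat \<Rightarrow> 'a) \<Rightarrow> nat \<Rightarrow> nat \<Rightarrow> 'a" where
  "mat4_star st X i j = st (X j i)"

definition mat4_eq :: "(nat \<Rightarrow> nat \<Rightarrow> 'a) \<Rightarrow> (nat \<Rightarrow> nat \<Rightarrow> 'a) \<Rightarrow> bool" where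
  "mat4_eq X Y \<longleftrightarrow> (\<forall>i<4. \<forall>j<4. X i j = Y i j)"

definition S4_M :: "(complex \<Rightarrow> 'a::ring_1) \<Rightarrow> complex \<Rightarrow> complex \<Rightarrow> complex
     \<Rightarrow> 'a \<Rightarrow> 'a \<Rightarrow> 'a \<Rightarrow> 'a \<Rightarrow> 'a \<Rightarrow> nat \<Rightarrow> nat \<Rightarrow> 'a" where
  "S4_M c p q s xi eta zeta U V i j =
     [[1 - zeta, 0, U, xi],
      [0, 1 - c (q^2) * zeta, - eta, - (c p * V)],
      [V, xi, c (s^2) + zeta, 0],
      [- eta, - (c (inverse p) * U), 0, c (s^2) + c (q^2) * zeta]] ! i ! j"

definition S4_e :: "(complex \<Rightarrow> 'a::ring_1) \<Rightarrow> complex \<Rightarrow> complex \<Rightarrow> complex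
     \<Rightarrow> 'a \<Rightarrow> 'a \<Rightarrow> 'a \<Rightarrow> 'a \<Rightarrow> 'a \<Rightarrow> nat \<Rightarrow> nat \<Rightarrow> 'a" where
  "S4_e c p q s xi eta zeta U V i j =
     c (inverse (1 + s^2)) * S4_M c p q s xi eta zeta U V i j"

end

theory Submission imports Defs begin

text \<open>Write e = M / (1 + s^2). The identity M^2 = (1 + s^2) M is checked entry by entry:
  the defining relations are oriented into rewrite rules that put every product of generators
  into a normal form (generators ordered xi, eta, zeta, U, V, and the adjacent pairs xi eta and
  eta xi replaced by their quadratic expressions in zeta, U, V), after which the sixteen entries
  of both sides coincide. For the involution, reality of q^2 and s^2 and cnj p = inverse p
  (as |p| = 1) make the entrywise adjoint of M equal to its transpose.\<close>

lemma central_complex_homD: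
  assumes "central_complex_hom c"
  shows "c 1 = 1" "c (z + w) = c z + c w" "c (z * w) = c z * c w" "c z * x = x * c z"
  using assms unfolding central_complex_hom_def by blast+

lemma central_complex_hom_zero: "central_complex_hom c \<Longrightarrow> c 0 = 0"
  using central_complex_homD(2)[of c 0 0] by simp

lemma central_complex_hom_minus:
  assumes "central_complex_hom c"
  shows "c (- z) = - c z"
proof -
  have "c z + c (- z) = 0"
    by (simp flip: central_complex_homD(2)[OF assms] add: central_complex_hom_zero[OF assms])
  then show ?thesis
    by (simp add: eq_neg_iff_add_eq_0 add.commute)
qed

lemma central_complex_hom_diff:
  assumes "central_complex_hom c"
  shows "c (z - w) = c z - c w"
  by (simp only: diff_conv_add_uminus central_complex_homD(2)[OF assms]
      central_complex_hom_minus[OF assms])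

lemma central_complex_hom_left_commute:
  assumes "central_complex_hom c"
  shows "x * (c z * y) = c z * (x * y)"
proof -
  have "x * (c z * y) = (x * c z) * y"
    by (simp only: mult.assoc)
  also have "\<dots> = (c z * x) * y"
    using central_complex_homD(4)[OF assms, of z x] by simp
  also have "\<dots> = c z * (x * y)"
    by (simp only: mult.assoc)
  finally show ?thesis .
qed

lemma central_complex_hom_solve:
  assumes "central_complex_hom c" "z \<noteq> 0" "x = c z * y"
  shows "y = c (inverse z) * x"
proof -
  have "c (inverse z) * c z = 1"
    using assms(2) by (simp flip: central_complex_homD(1,3)[OF assms(1)])
  then show ?thesis
    using assms(3) by (simp flip: mult.assoc)
qed

lemma algebra_involutionD:
  assumes "algebra_involution c st"
  shows "st (x + y) = st x + st y" "st (x * y) = st y * st x" "st (st x) = x"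
    "st (c z * x) = c (cnj z) * st x"
  using assms unfolding algebra_involution_def by blast+

lemma algebra_involution_zero: "algebra_involution c st \<Longrightarrow> st 0 = 0"
  using algebra_involutionD(1)[of c st 0 0] by simp

lemma algebra_involution_one:
  assumes "algebra_involution c st"
  shows "st 1 = 1"
proof -
  have "st 1 = st 1 * st (st 1)"
    by (simp add: algebra_involutionD(3)[OF assms])
  also have "\<dots> = st (st 1 * 1)"
    by (simp only: algebra_involutionD(2)[OF assms])
  finally show ?thesis
    by (simp add: algebra_involutionD(3)[OF assms])
qed

lemma algebra_involution_minus:
  assumes "algebra_involution c st"
  shows "st (- x) = - st x"
proof -
  have "st x + st (- x) = 0"
    using algebra_involutionD(1)[OF assms, of x "- x"] algebra_involution_zero[OF assms] by simp
  then show ?thesis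
    by (simp add: eq_neg_iff_add_eq_0 add.commute)
qed

lemma algebra_involution_diff:
  assumes "algebra_involution c st"
  shows "st (x - y) = st x - st y"
  by (simp only: diff_conv_add_uminus algebra_involutionD(1)[OF assms]
      algebra_involution_minus[OF assms])

lemma algebra_involution_scalar:
  assumes "algebra_involution c st"
  shows "st (c z) = c (cnj z)"
  using algebra_involutionD(4)[OF assms, of z 1] by (simp add: algebra_involution_one[OF assms])

lemma algebra_involution_swap:
  assumes "algebra_involution c st" "st x = y"
  shows "st y = x"
  using algebra_involutionD(3)[OF assms(1), of x] assms(2) by simp

lemma mat4_mult_scalar:
  assumes "central_complex_hom c"
  shows "mat4_mult (\<lambda>i j. c a * X i j) (\<lambda>i j. c b * Y i j) i j = c (a * b) * mat4_mult X Y i j"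
  unfolding mat4_mult_def sum_distrib_left
proof (rule sum.cong[OF refl])
  fix k
  have "c a * X i k * (c b * Y k j) = c a * (c b * (X i k * Y k j))"
    by (simp only: mult.assoc central_complex_hom_left_commute[OF assms, of "X i k"])
  then show "c a * X i k * (c b * Y k j) = c (a * b) * (X i k * Y k j)"
    by (simp add: central_complex_homD(3)[OF assms] mult.assoc)
qed

lemma mat4_idempotent_scaled:
  assumes "central_complex_hom c" "a \<noteq> 0"
    and "mat4_eq (mat4_mult X X) (\<lambda>i j. c a * X i j)"
  shows "mat4_eq (mat4_mult (\<lambda>i j. c (inverse a) * X i j) (\<lambda>i j. c (inverse a) * X i j))
                 (\<lambda>i j. c (inverse a) * X i j)"
proof -
  have "inverse a * inverse a * a = inverse a"
    using assms(2) by (simp add: field_simps)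
  then have scale: "c (inverse a * inverse a) * (c a * x) = c (inverse a) * x" for x
    by (metis central_complex_homD(3)[OF assms(1)] mult.assoc)
  show ?thesis
    using assms(3) unfolding mat4_eq_def mat4_mult_scalar[OF assms(1)] by (simp add: scale)
qed

lemma mat4_self_adjoint_scaled:
  assumes "algebra_involution c st" "cnj a = a" "mat4_eq (mat4_star st X) X"
  shows "mat4_eq (mat4_star st (\<lambda>i j. c a * X i j)) (\<lambda>i j. c a * X i j)"
  using assms unfolding mat4_eq_def mat4_star_def by (simp add: algebra_involutionD(4))

lemma S4_M_entries:
  "S4_M c p q s xi eta zeta U V 0 0 = 1 - zeta"
  "S4_M c p q s xi eta zeta U V 0 1 = 0"
  "S4_M c p q s xi eta zeta U V 0 2 = U"
  "S4_M c p q s xi eta zeta U V 0 3 = xi"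
  "S4_M c p q s xi eta zeta U V 1 0 = 0"
  "S4_M c p q s xi eta zeta U V 1 1 = 1 - c (q^2) * zeta"
  "S4_M c p q s xi eta zeta U V 1 2 = - eta"
  "S4_M c p q s xi eta zeta U V 1 3 = - (c p * V)"
  "S4_M c p q s xi eta zeta U V 2 0 = V"
  "S4_M c p q s xi eta zeta U V 2 1 = xi"
  "S4_M c p q s xi eta zeta U V 2 2 = c (s^2) + zeta"
  "S4_M c p q s xi eta zeta U V 2 3 = 0"
  "S4_M c p q s xi eta zeta U V 3 0 = - eta"
  "S4_M c p q s xi eta zeta U V 3 1 = - (c (inverse p) * U)"
  "S4_M c p q s xi eta zeta U V 3 2 = 0"
  "S4_M c p q s xi eta zeta U V 3 3 = c (s^2) + c (q^2) * zeta"
  by (simp_all add: S4_M_def eval_nat_numeral)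

lemma all_less_4_iff: "(\<forall>i<(4::nat). P i) \<longleftrightarrow> P 0 \<and> P 1 \<and> P 2 \<and> P 3"
  by (auto simp: eval_nat_numeral less_Suc_eq)

lemma sum_lessThan_4: "(\<Sum>k<(4::nat). f k) = f 0 + f 1 + f 2 + f 3"
  by (simp add: eval_nat_numeral add.assoc)

lemma mult_eq_imp_mult_assoc: "a * b = d \<Longrightarrow> a * (b * y) = d * (y::'a::semigroup_mult)"
  by (simp flip: mult.assoc)

lemma S4_rels_rewrite_rules:
  assumes "central_complex_hom c" "p \<noteq> 0" "q \<noteq> 0" "S4_rels c p q s xi eta zeta U V"
  shows "zeta * xi = c (q^2) * (xi * zeta)"
    "zeta * eta = c (inverse (q^2)) * (eta * zeta)"
    "U * xi = c (inverse p) * (xi * U)"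
    "V * xi = c p * (xi * V)"
    "V * eta = c (inverse p) * (eta * V)"
    "U * eta = c p * (eta * U)"
    "V * U = U * V" "V * zeta = zeta * V" "U * zeta = zeta * U"
    "xi * eta = (zeta - 1) * (zeta + c (s^2)) + U * V"
    "eta * xi = (c (q^2) * zeta - 1) * (c (q^2) * zeta + c (s^2)) + U * V"
  using assms(2-4) unfolding S4_rels_def
  by (auto simp: mult.assoc intro: central_complex_hom_solve[OF assms(1)])

lemma S4_M_square:
  fixes c :: "complex \<Rightarrow> 'a::ring_1"
  assumes c: "central_complex_hom c" and "p \<noteq> 0" "q \<noteq> 0"
    and rels: "S4_rels c p q s xi eta zeta U V"
  shows "mat4_eq (mat4_mult (S4_M c p q s xi eta zeta U V) (S4_M c p q s xi eta zeta U V))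
     (\<lambda>i j. c (1 + s^2) * S4_M c p q s xi eta zeta U V i j)"
proof -
  note rules = S4_rels_rewrite_rules[OF c \<open>p \<noteq> 0\<close> \<open>q \<noteq> 0\<close> rels]
  \<comment> \<open>algebra_simps nests products to the right, so the rules are also needed in that form\<close>
  note nested_rules = rules[THEN mult_eq_imp_mult_assoc]
  \<comment> \<open>instantiated at the generators only: for x = c w these commutations would loop\<close>
  note scalars_left = central_complex_hom_left_commute[OF c]
    central_complex_homD(4)[OF c, symmetric]
  have scalar_mult: "c z * c w = c (z * w)" "c z * (c w * x) = c (z * w) * x" for z w x
    by (simp_all add: central_complex_homD(3)[OF c] mult.assoc)
  note hom = central_complex_homD(1,2)[OF c] central_complex_hom_zero[OF c]
    central_complex_hom_minus[OF c] central_complex_hom_diff[OF c] scalar_mult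
  show ?thesis
    unfolding mat4_eq_def all_less_4_iff mat4_mult_def sum_lessThan_4
    apply (simp only: S4_M_entries mult_zero_left mult_zero_right add_0_left add_0_right)
    apply (intro conjI; simp add: algebra_simps rules nested_rules
        scalars_left[where x = xi] scalars_left[where x = eta] scalars_left[where x = zeta]
        scalars_left[where x = U] scalars_left[where x = V] hom \<open>p \<noteq> 0\<close> \<open>q \<noteq> 0\<close>)
    done
qed

lemma S4_M_self_adjoint:
  assumes c: "central_complex_hom c" and "p \<noteq> 0"
    and "Im (q^2) = 0" "Im (s^2) = 0" "cmod p = 1"
    and st: "algebra_involution c st"
    and "st zeta = zeta" "st xi = - eta" "st U = V"
  shows "mat4_eq (mat4_star st (S4_M c p q s xi eta zeta U V)) (S4_M c p q s xi eta zeta U V)"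
proof -
  have "st V = U"
    using algebra_involution_swap[OF st \<open>st U = V\<close>] .
  moreover have "st eta = - xi"
    using algebra_involution_swap[OF st \<open>st xi = - eta\<close>] algebra_involution_minus[OF st]
    by (metis minus_equation_iff)
  moreover have "cnj (q^2) = q^2" "cnj (s^2) = s^2"
    using \<open>Im (q^2) = 0\<close> \<open>Im (s^2) = 0\<close> by (metis Reals_cnj_iff complex_is_Real_iff)+
  moreover have "cnj p = inverse p"
    using \<open>cmod p = 1\<close> \<open>p \<noteq> 0\<close> complex_norm_square[of p] by (simp add: field_simps)
  ultimately show ?thesis
    unfolding mat4_eq_def mat4_star_def all_less_4_iff S4_M_entries
    using \<open>st zeta = zeta\<close> \<open>st xi = - eta\<close> \<open>st U = V\<close>
    by (simp add: algebra_involutionD(1,4)[OF st] algebra_involution_zero[OF st]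
        algebra_involution_one[OF st] algebra_involution_minus[OF st]
        algebra_involution_diff[OF st] algebra_involution_scalar[OF st] complex_cnj_inverse)
qed

theorem mainTheorem1:
  fixes c :: "complex \<Rightarrow> 'a::ring_1"
    and p q s :: complex
    and xi eta zeta U V :: 'a
  assumes "central_complex_hom c"
    and "p \<noteq> 0" and "q \<noteq> 0" and "s^2 \<noteq> -1"
    and "S4_rels c p q s xi eta zeta U V"
  shows "mat4_eq (mat4_mult (S4_e c p q s xi eta zeta U V) (S4_e c p q s xi eta zeta U V))
                 (S4_e c p q s xi eta zeta U V)
     \<and> (\<forall>st. Im (q^2) = 0 \<and> Im (s^2) = 0 \<and> cmod p = 1 \<and> algebra_involution c st
             \<and> st zeta = zeta \<and> st xi = - eta \<and> st U = V
           \<longrightarrow> mat4_eq (mat4_star st (S4_e c p q s xi eta zeta U V)) (S4_e c p q s xi eta zeta U V))"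
proof -
  have e_def: "S4_e c p q s xi eta zeta U V
      = (\<lambda>i j. c (inverse (1 + s^2)) * S4_M c p q s xi eta zeta U V i j)"
    by (simp add: S4_e_def fun_eq_iff)
  have "1 + s^2 \<noteq> 0"
    using \<open>s^2 \<noteq> -1\<close> by (metis add.commute add_eq_0_iff)
  then have "mat4_eq (mat4_mult (S4_e c p q s xi eta zeta U V) (S4_e c p q s xi eta zeta U V))
                     (S4_e c p q s xi eta zeta U V)"
    unfolding e_def using S4_M_square[OF assms(1,2,3,5)]
    by (rule mat4_idempotent_scaled[OF assms(1)])
  moreover have "mat4_eq (mat4_star st (S4_e c p q s xi eta zeta U V)) (S4_e c p q s xi eta zeta U V)"
    if "Im (q^2) = 0" "Im (s^2) = 0" "cmod p = 1" "algebra_involution c st"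
      "st zeta = zeta" "st xi = - eta" "st U = V" for st
  proof -
    have "inverse (1 + s^2) \<in> \<real>"
      using \<open>Im (s^2) = 0\<close>
      by (intro Reals_inverse Reals_add Reals_1) (simp add: complex_is_Real_iff)
    then have "cnj (inverse (1 + s^2)) = inverse (1 + s^2)"
      by (simp only: Reals_cnj_iff)
    then show ?thesis
      unfolding e_def using S4_M_self_adjoint[OF assms(1,2) that]
      by (rule mat4_self_adjoint_scaled[OF \<open>algebra_involution c st\<close>])
  qed
  ultimately show ?thesis by blast
qed

end
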